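(* Let $f\colon M^n\to\mathbb{R}^{n+p}$ be an isometric immersion with second fundamental form $\alpha$, normal connection $\nabla^\perp$ and curvature tensor $R$ of $M^n$, and let $\tau$ be an infinitesimal bending of $f$. Then for all $X,Y,Z,W\in\mathfrak{X}(M)$: $$\langle\beta(X,W),\alpha(Y,Z)\rangle+\langle\alpha(X,W),\beta(Y,Z)\rangle=\langle\beta(X,Z),\alpha(Y,W)\rangle+\langle\alpha(X,Z),\beta(Y,W)\rangle$$ and $$(\nabla^\perp_X\beta)(Y,Z)-(\nabla^\perp_Y\beta)(X,Z)=\alpha(Y,\mathcal{Y}(X,Z))-\alpha(X,\mathcal{Y}(Y,Z))-(LR(X,Y)Z)_{N_fM}.$$
   Context: An infinitesimal bending of $f$ is a smooth map $\tau\colon M^n\to\mathbb{R}^{n+p}$ with $\langle f_*X,\tilde\nabla_X\tau\rangle=0$ for all tangent $X$, $\tilde\nabla$ the Euclidean connection. Define $L\in\Gamma(\mathrm{Hom}(TM,f^*T\mathbb{R}^{n+p}))$ by $LX=\tilde\nabla_X\tau$ and the symmetric tensor $B(X,Y)=(\tilde\nabla_XL)Y=\tilde\nabla_X(LY)-L\nabla_XY$, with $\nabla$ the Levi-Civita connection of $M$. Write $B(X,Y)=f_*\mathcal{Y}(X,Y)+\beta(X,Y)$ with $\mathcal{Y}$ tangent and $\beta$ normal to $f$. Here $(\nabla^\perp_X\beta)(Y,Z)=\nabla^\perp_X\beta(Y,Z)-\beta(\nabla_XY,Z)-\beta(Y,\nabla_XZ)$ and $(\cdot)_{N_fM}$ denotes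 the normal component. *)

theory Defs
  imports "HOL-Analysis.Analysis"
begin

text \<open>Local (chart) model: M^n is an open set U of an n-dimensional Euclidean space 'a,
  the ambient space R^(n+p) is the Euclidean space 'b, vector fields on M are maps U -> 'a.\<close>

fun Ck :: "nat \<Rightarrow> 'a::euclidean_space set \<Rightarrow> ('a \<Rightarrow> 'b::real_normed_vector) \<Rightarrow> bool" where
  "Ck 0 U F = continuous_on U F"
| "Ck (Suc k) U F = ((\<forall>x\<in>U. F differentiable (at x)) \<and>
      (\<forall>v. Ck k U (\<lambda>x. frechet_derivative F (at x) v)))"

definition smooth_on :: "'a::euclidean_space set \<Rightarrow> ('a \<Rightarrow> 'b::real_normed_vector) \<Rightarrow> bool" where
  "smooth_on U F = (\<forall>k. Ck k U F)"

definition fd :: "('a::euclidean_space \<Rightarrow> 'b::real_normed_vector) \<Rightarrow> 'a \<Rightarrow> 'a \<Rightarrow> 'b" where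
  "fd F x = frechet_derivative F (at x)"

definition dir :: "('a::euclidean_space \<Rightarrow> 'b::real_normed_vector) \<Rightarrow> ('a \<Rightarrow> 'a) \<Rightarrow> 'a \<Rightarrow> 'b" where
  "dir F X x = fd F x (X x)"

definition push :: "('a::euclidean_space \<Rightarrow> 'b::real_normed_vector) \<Rightarrow> ('a \<Rightarrow> 'a) \<Rightarrow> 'a \<Rightarrow> 'b" where
  "push f X x = fd f x (X x)"

definition immersion_on :: "'a::euclidean_space set \<Rightarrow> ('a \<Rightarrow> 'b::euclidean_space) \<Rightarrow> bool" where
  "immersion_on U f = (open U \<and> smooth_on U f \<and> (\<forall>x\<in>U. inj (fd f x)))"

definition tanp :: "('a::euclidean_space \<Rightarrow> 'b::euclidean_space) \<Rightarrow> 'a \<Rightarrow> 'b \<Rightarrow> 'b" where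
  "tanp f x v = closest_point (range (fd f x)) v"

definition norp :: "('a::euclidean_space \<Rightarrow> 'b::euclidean_space) \<Rightarrow> 'a \<Rightarrow> 'b \<Rightarrow> 'b" where
  "norp f x v = v - tanp f x v"

definition gf :: "('a::euclidean_space \<Rightarrow> 'b::euclidean_space) \<Rightarrow> ('a \<Rightarrow> 'a) \<Rightarrow> ('a \<Rightarrow> 'a) \<Rightarrow> 'a \<Rightarrow> real" where
  "gf f X Y y = fd f y (X y) \<bullet> fd f y (Y y)"

definition bracket :: "('a::euclidean_space \<Rightarrow> 'a) \<Rightarrow> ('a \<Rightarrow> 'a) \<Rightarrow> 'a \<Rightarrow> 'a" where
  "bracket X Y x = dir Y X x - dir X Y x"

definition koszul :: "('a::euclidean_space \<Rightarrow> 'b::euclidean_space) \<Rightarrow> ('a \<Rightarrow> 'a) \<Rightarrow> ('a \<Rightarrow> 'a) \<Rightarrow> ('a \<Rightarrow> 'a) \<Rightarrow> 'a \<Rightarrow> real" where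
  "koszul f X Y Z x =
     dir (gf f Y Z) X x + dir (gf f X Z) Y x - dir (gf f X Y) Z x
     + gf f (bracket X Y) Z x - gf f (bracket X Z) Y x - gf f (bracket Y Z) X x"

definition LC :: "('a::euclidean_space \<Rightarrow> 'b::euclidean_space) \<Rightarrow> ('a \<Rightarrow> 'a) \<Rightarrow> ('a \<Rightarrow> 'a) \<Rightarrow> 'a \<Rightarrow> 'a" where
  "LC f X Y x = (THE w. \<forall>z. 2 * (fd f x w \<bullet> fd f x z) = koszul f X Y (\<lambda>_. z) x)"

definition curv :: "('a::euclidean_space \<Rightarrow> 'b::euclidean_space) \<Rightarrow> ('a \<Rightarrow> 'a) \<Rightarrow> ('a \<Rightarrow> 'a) \<Rightarrow> ('a \<Rightarrow> 'a) \<Rightarrow> 'a \<Rightarrow> 'a" where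
  "curv f X Y Z x = LC f X (LC f Y Z) x - LC f Y (LC f X Z) x - LC f (bracket X Y) Z x"

definition sff :: "('a::euclidean_space \<Rightarrow> 'b::euclidean_space) \<Rightarrow> ('a \<Rightarrow> 'a) \<Rightarrow> ('a \<Rightarrow> 'a) \<Rightarrow> 'a \<Rightarrow> 'b" where
  "sff f X Y x = norp f x (dir (push f Y) X x)"

definition inf_bending :: "'a::euclidean_space set \<Rightarrow> ('a \<Rightarrow> 'b::euclidean_space) \<Rightarrow> ('a \<Rightarrow> 'b) \<Rightarrow> bool" where
  "inf_bending U f \<tau> = (smooth_on U \<tau> \<and> (\<forall>x\<in>U. \<forall>v. fd f x v \<bullet> fd \<tau> x v = 0))"

definition Lmap :: "('a::euclidean_space \<Rightarrow> 'b::euclidean_space) \<Rightarrow> ('a \<Rightarrow> 'a) \<Rightarrow> 'a \<Rightarrow> 'b" where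
  "Lmap \<tau> X x = dir \<tau> X x"

definition Btens :: "('a::euclidean_space \<Rightarrow> 'b::euclidean_space) \<Rightarrow> ('a \<Rightarrow> 'b) \<Rightarrow> ('a \<Rightarrow> 'a) \<Rightarrow> ('a \<Rightarrow> 'a) \<Rightarrow> 'a \<Rightarrow> 'b" where
  "Btens f \<tau> X Y x = dir (Lmap \<tau> Y) X x - Lmap \<tau> (LC f X Y) x"

definition betaT :: "('a::euclidean_space \<Rightarrow> 'b::euclidean_space) \<Rightarrow> ('a \<Rightarrow> 'b) \<Rightarrow> ('a \<Rightarrow> 'a) \<Rightarrow> ('a \<Rightarrow> 'a) \<Rightarrow> 'a \<Rightarrow> 'b" where
  "betaT f \<tau> X Y x = norp f x (Btens f \<tau> X Y x)"

definition Ycal :: "('a::euclidean_space \<Rightarrow> 'b::euclidean_space) \<Rightarrow> ('a \<Rightarrow> 'b) \<Rightarrow> ('a \<Rightarrow> 'a) \<Rightarrow> ('a \<Rightarrow> 'a) \<Rightarrow> 'a \<Rightarrow> 'a" where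
  "Ycal f \<tau> X Y x = inv_into UNIV (fd f x) (tanp f x (Btens f \<tau> X Y x))"

definition nperp_beta :: "('a::euclidean_space \<Rightarrow> 'b::euclidean_space) \<Rightarrow> ('a \<Rightarrow> 'b) \<Rightarrow> ('a \<Rightarrow> 'a) \<Rightarrow> ('a \<Rightarrow> 'a) \<Rightarrow> ('a \<Rightarrow> 'a) \<Rightarrow> 'a \<Rightarrow> 'b" where
  "nperp_beta f \<tau> X Y Z x =
     norp f x (dir (betaT f \<tau> Y Z) X x) - betaT f \<tau> (LC f X Y) Z x - betaT f \<tau> Y (LC f X Z) x"

end

theory Submission
  imports Defs
begin

text \<open>In a chart, the Levi-Civita connection of the induced metric is given by the Gauss formula
  nabla_X Y = dY(X) + df^+ d2f(Y, X), where df^+ is the least squares inverse of df, and alpha(X, Y)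
  is the normal part of d2f(Y, X); hence B(X, Y) = d2tau(Y, X) - dtau(df^+ d2f(Y, X)).
  Polarizing the bending condition <df u, dtau u> = 0 and differentiating it once and twice yields
  <df u, d2tau(v, w)> = - <d2f(v, w), dtau u> and the invariance of
  <d2f(u, z), d2tau(v, w)> + <d2f(v, w), d2tau(u, z)> under exchanging z and w, from which the
  first identity is linear algebra. The second identity follows by differentiating beta: the
  derivatives of L Z along X and Y commute up to dLZ([X, Y]), which cancels against the
  torsion-free connection and leaves the curvature term. Differentiability of df^+, needed to
  differentiate the connection, comes from a perturbation bound for linear equations.\<close>

section \<open>Derivatives and smooth maps\<close>

lemma fd_has_derivative: "F differentiable (at x) \<Longrightarrow> (F has_derivative fd F x) (at x)"
  unfolding fd_def by (rule frechet_derivative_works[THEN iffD1])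

lemma fd_unique: "(F has_derivative F') (at x) \<Longrightarrow> fd F x = F'"
  unfolding fd_def using frechet_derivative_at by metis

lemma linear_fd: "F differentiable (at x) \<Longrightarrow> linear (fd F x)"
  using fd_has_derivative has_derivative_linear by blast

lemma fd_const: "fd (\<lambda>_. c) x = (\<lambda>_. 0)"
  by (rule fd_unique) simp

lemma fd_add:
  assumes "F differentiable (at x)" "G differentiable (at x)"
  shows "fd (\<lambda>y. F y + G y) x v = fd F x v + fd G x v"
  using fd_unique[OF has_derivative_add[OF fd_has_derivative[OF assms(1)]
      fd_has_derivative[OF assms(2)]]]
  by simp

lemma fd_diff:
  assumes "F differentiable (at x)" "G differentiable (at x)"
  shows "fd (\<lambda>y. F y - G y) x v = fd F x v - fd G x v"
  using fd_unique[OF has_derivative_diff[OF fd_has_derivative[OF assms(1)]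
      fd_has_derivative[OF assms(2)]]]
  by simp

lemma fd_inner:
  assumes "F differentiable (at x)" "G differentiable (at x)"
  shows "fd (\<lambda>y. F y \<bullet> G y) x v = F x \<bullet> fd G x v + fd F x v \<bullet> G x"
  using fd_unique[OF has_derivative_inner[OF fd_has_derivative[OF assms(1)]
      fd_has_derivative[OF assms(2)]]]
  by simp

lemma has_derivative_cong_open:
  assumes "open U" "x \<in> U" "\<And>y. y \<in> U \<Longrightarrow> F y = G y"
  shows "(F has_derivative F') (at x) \<longleftrightarrow> (G has_derivative F') (at x)"
proof
  assume "(F has_derivative F') (at x)"
  then show "(G has_derivative F') (at x)"
    by (rule has_derivative_transform_within_open[OF _ assms(1,2)]) (simp add: assms(3))
next
  assume "(G has_derivative F') (at x)"
  then show "(F has_derivative F') (at x)"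
    by (rule has_derivative_transform_within_open[OF _ assms(1,2)]) (simp add: assms(3))
qed

lemma differentiable_cong_open:
  assumes "open U" "x \<in> U" "\<And>y. y \<in> U \<Longrightarrow> F y = G y"
  shows "F differentiable (at x) \<longleftrightarrow> G differentiable (at x)"
  unfolding differentiable_def using has_derivative_cong_open[where F=F and G=G, OF assms] by blast

lemma fd_cong_open:
  assumes "open U" "x \<in> U" "\<And>y. y \<in> U \<Longrightarrow> F y = G y"
  shows "fd F x = fd G x"
  unfolding fd_def frechet_derivative_def
  using has_derivative_cong_open[where F=F and G=G, OF assms] by simp

lemma fd_eq_0_open:
  assumes "open U" "x \<in> U" "\<And>y. y \<in> U \<Longrightarrow> F y = 0"
  shows "fd F x v = 0"
  using fd_cong_open[OF assms(1,2), of F "\<lambda>_. 0"] assms(3) by (simp add: fd_const)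

lemma linear_eq_sum_Basis:
  assumes "linear g"
  shows "g w = (\<Sum>i\<in>Basis. (w \<bullet> i) *\<^sub>R g i)"
proof -
  have "g (\<Sum>i\<in>Basis. (w \<bullet> i) *\<^sub>R i) = (\<Sum>i\<in>Basis. (w \<bullet> i) *\<^sub>R g i)"
    by (simp add: linear_sum[OF assms] linear_cmul[OF assms])
  then show ?thesis by (simp add: euclidean_representation)
qed

lemma Ck_cong:
  assumes "open U" "\<And>y. y \<in> U \<Longrightarrow> F y = G y"
  shows "Ck k U F = Ck k U G"
  using assms(2)
proof (induction k arbitrary: F G)
  case 0
  then show ?case using continuous_on_cong by force
next
  case (Suc k)
  have "Ck k U (\<lambda>x. fd F x v) = Ck k U (\<lambda>x. fd G x v)" for v
    by (rule Suc.IH) (simp add: fd_cong_open[OF assms(1) _ Suc.prems])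
  moreover have "(\<forall>x\<in>U. F differentiable (at x)) \<longleftrightarrow> (\<forall>x\<in>U. G differentiable (at x))"
    using differentiable_cong_open[OF assms(1)] Suc.prems by blast
  ultimately show ?case by (simp add: fd_def)
qed

lemma Ck_Suc_imp_Ck: "Ck (Suc k) U F \<Longrightarrow> Ck k U F"
  by (induction k arbitrary: F)
    (auto simp: continuous_at_imp_continuous_on differentiable_imp_continuous_within)

lemma Ck_SucD:
  assumes "Ck (Suc k) U F"
  shows "\<And>x. x \<in> U \<Longrightarrow> (F has_derivative fd F x) (at x)" "\<And>v. Ck k U (\<lambda>x. fd F x v)"
  using assms fd_has_derivative by (auto simp: fd_def)

lemma Ck_SucI:
  assumes "open U" "\<And>x. x \<in> U \<Longrightarrow> (F has_derivative F' x) (at x)" "\<And>v. Ck k U (\<lambda>x. F' x v)"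
  shows "Ck (Suc k) U F"
proof -
  have "Ck k U (\<lambda>x. fd F x v)" for v
    using assms(3)[of v] Ck_cong[OF assms(1), of "\<lambda>x. fd F x v" "\<lambda>x. F' x v"] assms(2) fd_unique
    by metis
  then show ?thesis using assms(2) by (auto simp: fd_def differentiable_def)
qed

lemma Ck_const: "open U \<Longrightarrow> Ck k U (\<lambda>_. c)"
  by (induction k arbitrary: c) (auto intro!: Ck_SucI[where F'="\<lambda>x v. 0"])

lemma Ck_bounded_linear:
  assumes "open U" "bounded_linear h"
  shows "Ck k U F \<Longrightarrow> Ck k U (\<lambda>y. h (F y))"
proof (induction k arbitrary: F)
  case 0
  then show ?case
    using assms(2) by (simp add: continuous_on_compose2[of UNIV h] linear_continuous_on)
next
  case (Suc k)
  note D = Ck_SucD[OF Suc.prems]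
  show ?case
    by (rule Ck_SucI[OF assms(1), where F'="\<lambda>x v. h (fd F x v)"])
      (use bounded_linear.has_derivative[OF assms(2) D(1)] Suc.IH D(2) in auto)
qed

lemma Ck_add:
  assumes "open U"
  shows "Ck k U F \<Longrightarrow> Ck k U G \<Longrightarrow> Ck k U (\<lambda>y. F y + G y)"
proof (induction k arbitrary: F G)
  case 0
  then show ?case by (simp add: continuous_on_add)
next
  case (Suc k)
  note D1 = Ck_SucD[OF Suc.prems(1)] and D2 = Ck_SucD[OF Suc.prems(2)]
  show ?case
    by (rule Ck_SucI[OF assms(1), where F'="\<lambda>x v. fd F x v + fd G x v"])
      (use has_derivative_add[OF D1(1) D2(1)] Suc.IH D1(2) D2(2) in auto)
qed

lemma Ck_bounded_bilinear:
  assumes "open U" "bounded_bilinear bil"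
  shows "Ck k U F \<Longrightarrow> Ck k U G \<Longrightarrow> Ck k U (\<lambda>y. bil (F y) (G y))"
proof (induction k arbitrary: F G)
  case 0
  then show ?case by (simp add: bounded_bilinear.continuous_on[OF assms(2)])
next
  case (Suc k)
  note D1 = Ck_SucD[OF Suc.prems(1)] and D2 = Ck_SucD[OF Suc.prems(2)]
  have "Ck k U F" "Ck k U G" using Suc.prems Ck_Suc_imp_Ck by blast+
  then show ?case
    by (intro Ck_SucI[OF assms(1), where F'="\<lambda>x v. bil (F x) (fd G x v) + bil (fd F x v) (G x)"]
        bounded_bilinear.FDERIV[OF assms(2) D1(1) D2(1)] Ck_add[OF assms(1)] Suc.IH D1(2) D2(2))
qed

lemma smooth_on_iff:
  "smooth_on U F \<longleftrightarrow> continuous_on U F \<and> (\<forall>x\<in>U. F differentiable (at x)) \<and>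
     (\<forall>v. smooth_on U (\<lambda>x. fd F x v))"
  unfolding smooth_on_def fd_def
proof (intro iffI conjI allI)
  assume F: "\<forall>k. Ck k U F"
  show "continuous_on U F" using F[rule_format, of 0] by simp
  show "\<forall>x\<in>U. F differentiable (at x)" using F[rule_format, of 1] by simp
  show "Ck k U (\<lambda>x. frechet_derivative F (at x) v)" for k v using F[rule_format, of "Suc k"] by simp
next
  assume "continuous_on U F \<and> (\<forall>x\<in>U. F differentiable (at x)) \<and>
    (\<forall>v k. Ck k U (\<lambda>x. frechet_derivative F (at x) v))"
  then show "Ck k U F" for k by (cases k) simp_all
qed

lemma smooth_on_imp_differentiable: "smooth_on U F \<Longrightarrow> x \<in> U \<Longrightarrow> F differentiable (at x)"
  using smooth_on_iff by blast

lemma smooth_on_fd: "smooth_on U F \<Longrightarrow> smooth_on U (\<lambda>x. fd F x v)"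
  using smooth_on_iff by blast

lemma smooth_on_cong: "open U \<Longrightarrow> (\<And>y. y \<in> U \<Longrightarrow> F y = G y) \<Longrightarrow> smooth_on U F = smooth_on U G"
  unfolding smooth_on_def using Ck_cong by blast

lemma smooth_on_sum:
  assumes "open U" "finite I" "\<And>i. i \<in> I \<Longrightarrow> smooth_on U (F i)"
  shows "smooth_on U (\<lambda>y. \<Sum>i\<in>I. F i y)"
  using assms(2,3) unfolding smooth_on_def
proof (induction I rule: finite_induct)
  case empty
  show ?case by (simp add: Ck_const assms(1))
next
  case (insert j I)
  then have "Ck k U (F j)" "Ck k U (\<lambda>y. \<Sum>i\<in>I. F i y)" for k by auto
  then show ?case using insert(1,2) by (simp add: Ck_add[OF assms(1)])
qed

lemma smooth_on_fd_field:
  assumes "open U" "smooth_on U F" "smooth_on U X"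
  shows "smooth_on U (\<lambda>y. fd F y (X y))"
proof -
  have "Ck k U (\<lambda>y. X y \<bullet> i)" for k i
    using assms(3) Ck_bounded_linear[OF assms(1) bounded_linear_inner_left[of i], of k X]
    unfolding smooth_on_def by blast
  then have "smooth_on U (\<lambda>y. (X y \<bullet> i) *\<^sub>R fd F y i)" for i
    using Ck_bounded_bilinear[OF assms(1) bounded_bilinear_scaleR] smooth_on_fd[OF assms(2)]
    unfolding smooth_on_def by blast
  then have "smooth_on U (\<lambda>y. \<Sum>i\<in>Basis. (X y \<bullet> i) *\<^sub>R fd F y i)"
    by (intro smooth_on_sum[OF assms(1)]) auto
  moreover have "fd F y (X y) = (\<Sum>i\<in>Basis. (X y \<bullet> i) *\<^sub>R fd F y i)" if "y \<in> U" for y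
    using linear_eq_sum_Basis[OF linear_fd[OF smooth_on_imp_differentiable[OF assms(2) that]]] .
  ultimately show ?thesis
    using smooth_on_cong[where F="\<lambda>y. fd F y (X y)" and G="\<lambda>y. \<Sum>i\<in>Basis. (X y \<bullet> i) *\<^sub>R fd F y i"]
      assms(1) by blast
qed

section \<open>Symmetry of second derivatives\<close>

definition fd2 :: "('a::euclidean_space \<Rightarrow> 'b::real_normed_vector) \<Rightarrow> 'a \<Rightarrow> 'a \<Rightarrow> 'a \<Rightarrow> 'b" where
  "fd2 F x a b = fd (\<lambda>y. fd F y a) x b"

definition fd3 :: "('a::euclidean_space \<Rightarrow> 'b::real_normed_vector) \<Rightarrow> 'a \<Rightarrow> 'a \<Rightarrow> 'a \<Rightarrow> 'a \<Rightarrow> 'b" where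
  "fd3 F x a b c = fd (\<lambda>y. fd2 F y a b) x c"

lemma has_derivative_line_difference:
  assumes "F differentiable (at (a + s *\<^sub>R v))" "F differentiable (at (b + s *\<^sub>R v))"
  shows "((\<lambda>s. F (a + s *\<^sub>R v) - F (b + s *\<^sub>R v) - s *\<^sub>R c) has_derivative
      (\<lambda>h. h *\<^sub>R (fd F (a + s *\<^sub>R v) v - fd F (b + s *\<^sub>R v) v - c))) (at s within S)"
proof -
  have line: "((\<lambda>s. F (p + s *\<^sub>R v)) has_derivative (\<lambda>h. h *\<^sub>R fd F (p + s *\<^sub>R v) v)) (at s within S)"
    if "F differentiable (at (p + s *\<^sub>R v))" for p
  proof -
    have "((\<lambda>s. p + s *\<^sub>R v) has_derivative (\<lambda>h. h *\<^sub>R v)) (at s within S)"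
      by (auto intro!: derivative_eq_intros)
    from has_derivative_compose[OF this fd_has_derivative[OF that]] show ?thesis
      using linear_fd[OF that] by (simp add: linear_cmul)
  qed
  have "((\<lambda>s. s *\<^sub>R c) has_derivative (\<lambda>h. h *\<^sub>R c)) (at s within S)"
    by (auto intro!: derivative_eq_intros)
  from has_derivative_diff[OF has_derivative_diff[OF line[OF assms(1)] line[OF assms(2)]] this]
  show ?thesis by (simp add: scaleR_diff_right)
qed

lemma second_difference_estimate:
  fixes F :: "'a::euclidean_space \<Rightarrow> 'b::real_normed_vector"
  assumes U: "ball x r \<subseteq> U" "\<And>y. y \<in> U \<Longrightarrow> F differentiable (at y)"
    and G': "linear G'" "\<And>w. norm w < r \<Longrightarrow> norm (fd F (x + w) v - fd F x v - G' w) \<le> \<eta> * norm w"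
    and \<eta>: "0 \<le> \<eta>" and t: "0 < t" "t * (norm u + norm v) < r"
  shows "norm (F (x + t *\<^sub>R u + t *\<^sub>R v) - F (x + t *\<^sub>R u) - F (x + t *\<^sub>R v) + F x - (t * t) *\<^sub>R G' u)
          \<le> 2 * \<eta> * (norm u + norm v) * (t * t)"
proof -
  define M where "M = norm u + norm v"
  define G where "G y = fd F y v" for y
  define \<phi> where "\<phi> s = F (x + t *\<^sub>R u + s *\<^sub>R v) - F (x + s *\<^sub>R v) - s *\<^sub>R (t *\<^sub>R G' u)" for s
  define \<phi>' where "\<phi>' s = G (x + t *\<^sub>R u + s *\<^sub>R v) - G (x + s *\<^sub>R v) - t *\<^sub>R G' u" for s
  have small: "norm (t *\<^sub>R u + s *\<^sub>R v) \<le> t * M" "norm (s *\<^sub>R v) \<le> t * M" if "s \<in> {0..t}" for s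
  proof -
    have s: "0 \<le> s" "s \<le> t" using that by auto
    have "norm (s *\<^sub>R v) = s * norm v" "norm (t *\<^sub>R u) = t * norm u" using s t(1) by simp_all
    moreover have "s * norm v \<le> t * norm v" "0 \<le> t * norm u" using s t(1)
      by (simp_all add: mult_right_mono)
    moreover have "t * M = t * norm u + t * norm v" by (simp add: M_def distrib_left)
    ultimately show "norm (t *\<^sub>R u + s *\<^sub>R v) \<le> t * M" "norm (s *\<^sub>R v) \<le> t * M"
      using norm_triangle_ineq[of "t *\<^sub>R u" "s *\<^sub>R v"] by linarith+
  qed
  have inU: "x + w \<in> U" if "norm w < r" for w
    using U(1) that by (auto simp: dist_norm)
  have "(\<phi> has_derivative (\<lambda>h. h *\<^sub>R \<phi>' s)) (at s within {0..t})" if "s \<in> {0..t}" for s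
    unfolding \<phi>_def \<phi>'_def G_def
    using inU[OF le_less_trans[OF small(1)[OF that] t(2)[folded M_def]]]
      inU[OF le_less_trans[OF small(2)[OF that] t(2)[folded M_def]]]
    by (intro has_derivative_line_difference U(2)) (simp_all add: add.assoc)
  moreover have "onorm (\<lambda>h. h *\<^sub>R \<phi>' s) \<le> 2 * \<eta> * M * t" if "s \<in> {0..t}" for s
  proof -
    let ?w = "t *\<^sub>R u + s *\<^sub>R v"
    have "\<phi>' s = (G (x + ?w) - G x - G' ?w) - (G (x + s *\<^sub>R v) - G x - G' (s *\<^sub>R v))"
      unfolding \<phi>'_def using G'(1) by (simp add: linear_add linear_cmul algebra_simps)
    then have "norm (\<phi>' s) \<le> \<eta> * norm ?w + \<eta> * norm (s *\<^sub>R v)"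
      using G'(2)[of ?w] G'(2)[of "s *\<^sub>R v"] small[OF that] t(2) norm_triangle_ineq4
      unfolding G_def M_def by (smt (verit))
    also have "\<dots> \<le> 2 * \<eta> * M * t"
      using mult_left_mono[OF small(1)[OF that] \<eta>] mult_left_mono[OF small(2)[OF that] \<eta>]
      by (simp add: algebra_simps)
    finally show ?thesis
      by (simp add: onorm_scaleR_left[OF bounded_linear_ident] onorm_id)
  qed
  ultimately have "norm (\<phi> t - \<phi> 0) \<le> 2 * \<eta> * M * t * norm (t - 0)"
    using t(1) by (intro differentiable_bound[of "{0..t}"]) auto
  then show ?thesis
    using t(1) unfolding \<phi>_def M_def by (simp add: algebra_simps)
qed

lemma has_derivative_at_increment:
  assumes "(G has_derivative G') (at x)" "\<eta> > 0"
  shows "\<exists>d>0. \<forall>w. norm w < d \<longrightarrow> norm (G (x + w) - G x - G' w) \<le> \<eta> * norm w"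
proof -
  obtain d where "d > 0"
    and d: "\<forall>y. norm (y - x) < d \<longrightarrow> norm (G y - G x - G' (y - x)) \<le> \<eta> * norm (y - x)"
    using assms unfolding has_derivative_at_alt by blast
  show ?thesis
  proof (intro exI[of _ d] conjI allI impI \<open>d > 0\<close>)
    show "norm (G (x + w) - G x - G' w) \<le> \<eta> * norm w" if "norm w < d" for w
      using d[rule_format, of "x + w"] that by simp
  qed
qed

lemma norm_fd2_commutator_le:
  fixes F :: "'a::euclidean_space \<Rightarrow> 'b::real_normed_vector"
  assumes U: "open U" "x \<in> U" "\<And>y. y \<in> U \<Longrightarrow> F differentiable (at y)"
    and a: "(\<lambda>y. fd F y a) differentiable (at x)" and b: "(\<lambda>y. fd F y b) differentiable (at x)"
    and \<eta>: "\<eta> > 0"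
  shows "norm (fd2 F x a b - fd2 F x b a) \<le> 4 * \<eta> * (norm a + norm b)"
proof -
  define M where "M = norm a + norm b"
  obtain ra rb r0 where r: "ra > 0" "rb > 0" "r0 > 0" "ball x r0 \<subseteq> U"
    and ra: "\<And>w. norm w < ra \<Longrightarrow> norm (fd F (x + w) a - fd F x a - fd2 F x a w) \<le> \<eta> * norm w"
    and rb: "\<And>w. norm w < rb \<Longrightarrow> norm (fd F (x + w) b - fd F x b - fd2 F x b w) \<le> \<eta> * norm w"
    using has_derivative_at_increment[OF fd_has_derivative[OF a] \<eta>]
      has_derivative_at_increment[OF fd_has_derivative[OF b] \<eta>] open_contains_ball[of U] U(1,2)
    unfolding fd2_def by meson
  define r where "r = min r0 (min ra rb)"
  define t where "t = r / (2 * (M + 1))"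
  have "r > 0" "M \<ge> 0" using r unfolding r_def M_def by simp_all
  have "t * M = r * (M / (2 * (M + 1)))" unfolding t_def by simp
  also have "\<dots> < r * 1" using \<open>r > 0\<close> \<open>M \<ge> 0\<close> by (intro mult_strict_left_mono) auto
  finally have t: "0 < t" "t * M < r" using \<open>r > 0\<close> \<open>M \<ge> 0\<close> unfolding t_def by auto
  have "ball x r \<subseteq> U" using r unfolding r_def by auto
  note est = second_difference_estimate[OF this U(3) _ _ less_imp_le[OF \<eta>] t(1)]
  define D where "D = F (x + t *\<^sub>R a + t *\<^sub>R b) - F (x + t *\<^sub>R a) - F (x + t *\<^sub>R b) + F x"
  have ab: "norm (D - (t * t) *\<^sub>R fd2 F x a b) \<le> 2 * \<eta> * M * (t * t)"
    using est[of "fd2 F x a" a b] ra t(2) linear_fd[OF a] unfolding D_def M_def r_def fd2_def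
    by (simp add: algebra_simps)
  have ba: "norm (D - (t * t) *\<^sub>R fd2 F x b a) \<le> 2 * \<eta> * M * (t * t)"
    using est[of "fd2 F x b" b a] rb t(2) linear_fd[OF b] unfolding D_def M_def r_def fd2_def
    by (simp add: algebra_simps)
  have "(t * t) *\<^sub>R (fd2 F x a b - fd2 F x b a)
      = (D - (t * t) *\<^sub>R fd2 F x b a) - (D - (t * t) *\<^sub>R fd2 F x a b)"
    by (simp add: algebra_simps)
  then have "norm ((t * t) *\<^sub>R (fd2 F x a b - fd2 F x b a)) \<le> (t * t) * (4 * \<eta> * M)"
    using norm_triangle_ineq4[of "D - (t * t) *\<^sub>R fd2 F x b a" "D - (t * t) *\<^sub>R fd2 F x a b"] ab ba
    by (simp only:) (simp add: algebra_simps)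
  then show ?thesis using t(1) unfolding M_def by simp
qed

text \<open>Schwarz's theorem in the form that only requires the two partial derivatives to be
  differentiable at the point: both mixed derivatives are the limit of the same second difference.\<close>
lemma fd2_symmetric:
  fixes F :: "'a::euclidean_space \<Rightarrow> 'b::real_normed_vector"
  assumes U: "open U" "x \<in> U" "\<And>y. y \<in> U \<Longrightarrow> F differentiable (at y)"
    and a: "(\<lambda>y. fd F y a) differentiable (at x)" and b: "(\<lambda>y. fd F y b) differentiable (at x)"
  shows "fd2 F x a b = fd2 F x b a"
proof -
  define M where "M = norm a + norm b"
  have "norm (fd2 F x a b - fd2 F x b a) \<le> 0 + e" if "e > 0" for e
  proof -
    have "M \<ge> 0" unfolding M_def by simp
    then have "e / (4 * (M + 1)) > 0" using that by simp
    have "4 * (e / (4 * (M + 1))) * M = e * (M / (M + 1))" using \<open>M \<ge> 0\<close> by (simp add: field_simps)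
    also have "\<dots> \<le> e" by (rule mult_left_le) (use that \<open>M \<ge> 0\<close> in auto)
    finally show ?thesis
      using norm_fd2_commutator_le[OF U a b \<open>e / (4 * (M + 1)) > 0\<close>] unfolding M_def by simp
  qed
  then show ?thesis
    using field_le_epsilon[of "norm (fd2 F x a b - fd2 F x b a)" 0] by simp
qed

lemma smooth_on_fd2_symmetric:
  assumes "open U" "smooth_on U F" "x \<in> U"
  shows "fd2 F x a b = fd2 F x b a"
  by (rule fd2_symmetric[OF assms(1,3)])
    (auto intro: smooth_on_imp_differentiable[OF assms(2)]
      smooth_on_imp_differentiable[OF smooth_on_fd[OF assms(2)] assms(3)])

lemma smooth_on_fd3_symmetric:
  assumes "open U" "smooth_on U F" "x \<in> U"
  shows "fd3 F x a b c = fd3 F x b a c" "fd3 F x a b c = fd3 F x a c b"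
proof -
  show "fd3 F x a b c = fd3 F x b a c"
    using fd_cong_open[where F="\<lambda>y. fd2 F y a b" and G="\<lambda>y. fd2 F y b a", OF assms(1,3)]
      smooth_on_fd2_symmetric[OF assms(1,2)] by (simp add: fd3_def)
  show "fd3 F x a b c = fd3 F x a c b"
    using smooth_on_fd2_symmetric[OF assms(1) smooth_on_fd[OF assms(2)] assms(3)]
    unfolding fd3_def fd2_def .
qed

lemma has_derivative_fd_sum_Basis:
  assumes "open U" "smooth_on U F" "x \<in> U" "(W has_derivative W') (at x)"
  shows "((\<lambda>y. fd F y (W y)) has_derivative
      (\<lambda>v. \<Sum>i\<in>Basis. (W x \<bullet> i) *\<^sub>R fd2 F x i v + (W' v \<bullet> i) *\<^sub>R fd F x i)) (at x)"
proof -
  have "((\<lambda>y. \<Sum>i\<in>Basis. (W y \<bullet> i) *\<^sub>R fd F y i) has_derivative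
      (\<lambda>v. \<Sum>i\<in>Basis. (W x \<bullet> i) *\<^sub>R fd2 F x i v + (W' v \<bullet> i) *\<^sub>R fd F x i)) (at x)"
    unfolding fd2_def
    by (rule has_derivative_sum, rule has_derivative_scaleR[OF
        has_derivative_inner_left[OF assms(4)]
        fd_has_derivative[OF smooth_on_imp_differentiable[OF smooth_on_fd[OF assms(2)] assms(3)]]])
  moreover have "(\<Sum>i\<in>Basis. (W y \<bullet> i) *\<^sub>R fd F y i) = fd F y (W y)" if "y \<in> U" for y
    by (rule linear_eq_sum_Basis[OF linear_fd[OF smooth_on_imp_differentiable[OF assms(2) that]],
      symmetric])
  ultimately show ?thesis
    by (rule has_derivative_transform_within_open[OF _ assms(1,3)])
qed

lemma fd2_eq_sum_Basis:
  assumes "open U" "smooth_on U F" "x \<in> U"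
  shows "fd2 F x a b = (\<Sum>i\<in>Basis. (a \<bullet> i) *\<^sub>R fd2 F x i b)"
proof -
  have "fd (\<lambda>y. fd F y a) x = (\<lambda>v. \<Sum>i\<in>Basis. (a \<bullet> i) *\<^sub>R fd2 F x i v + (0 \<bullet> i) *\<^sub>R fd F x i)"
    by (rule fd_unique[OF has_derivative_fd_sum_Basis[OF assms has_derivative_const]])
  then show ?thesis unfolding fd2_def[of F x a b] by simp
qed

lemma has_derivative_fd_field:
  assumes "open U" "smooth_on U F" "x \<in> U" "W differentiable (at x)"
  shows "((\<lambda>y. fd F y (W y)) has_derivative (\<lambda>v. fd2 F x (W x) v + fd F x (fd W x v))) (at x)"
proof -
  note lin = linear_fd[OF smooth_on_imp_differentiable[OF assms(2,3)]]
  have "(\<lambda>v. \<Sum>i\<in>Basis. (W x \<bullet> i) *\<^sub>R fd2 F x i v + (fd W x v \<bullet> i) *\<^sub>R fd F x i)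
      = (\<lambda>v. fd2 F x (W x) v + fd F x (fd W x v))"
  proof
    fix v
    show "(\<Sum>i\<in>Basis. (W x \<bullet> i) *\<^sub>R fd2 F x i v + (fd W x v \<bullet> i) *\<^sub>R fd F x i)
        = fd2 F x (W x) v + fd F x (fd W x v)"
      by (simp only: sum.distrib fd2_eq_sum_Basis[OF assms(1-3), of "W x" v]
          linear_eq_sum_Basis[OF lin, of "fd W x v"])
  qed
  with has_derivative_fd_sum_Basis[OF assms(1-3) fd_has_derivative[OF assms(4)]] show ?thesis
    by simp
qed

lemma fd_fd_field:
  assumes "open U" "smooth_on U F" "x \<in> U" "W differentiable (at x)"
  shows "fd (\<lambda>y. fd F y (W y)) x v = fd2 F x (W x) v + fd F x (fd W x v)"
  using fd_unique[OF has_derivative_fd_field[OF assms]] by simp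

lemma differentiable_fd_field:
  assumes "open U" "smooth_on U F" "x \<in> U" "W differentiable (at x)"
  shows "(\<lambda>y. fd F y (W y)) differentiable (at x)"
  using has_derivative_fd_field[OF assms] differentiable_def by blast

lemma fd_fd_field_commute:
  assumes "open U" "smooth_on U F" "x \<in> U" "P differentiable (at x)" "Q differentiable (at x)"
  shows "fd (\<lambda>y. fd F y (Q y)) x (P x) - fd (\<lambda>y. fd F y (P y)) x (Q x) = fd F x (bracket P Q x)"
  using linear_diff[OF linear_fd[OF smooth_on_imp_differentiable[OF assms(2,3)]]]
  unfolding fd_fd_field[OF assms(1-3) assms(5)] fd_fd_field[OF assms(1-3) assms(4)]
    bracket_def dir_def smooth_on_fd2_symmetric[OF assms(1-3), of "Q x" "P x"]
  by simp

section \<open>Least squares solutions\<close>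

lemma closest_point_range_linear:
  fixes G :: "'a::euclidean_space \<Rightarrow> 'b::euclidean_space"
  assumes "linear G"
  shows "closest_point (range G) b \<in> range G"
    and "(b - closest_point (range G) b) \<bullet> G w = 0"
proof -
  have S: "convex (range G)" "closed (range G)"
    using linear_subspace_image[OF assms subspace_UNIV] closed_subspace subspace_imp_convex by auto
  then show p: "closest_point (range G) b \<in> range G"
    by (intro closest_point_in_set) auto
  then obtain w0 where w0: "closest_point (range G) b = G w0" by blast
  show "(b - closest_point (range G) b) \<bullet> G w = 0"
    using closest_point_dot[OF S rangeI[of G "w0 + w"], of b]
      closest_point_dot[OF S rangeI[of G "w0 - w"], of b]
    by (simp add: w0 linear_add[OF assms] linear_diff[OF assms] inner_diff_right)
qed

lemma closest_point_range_linear_unique: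
  fixes G :: "'a::euclidean_space \<Rightarrow> 'b::euclidean_space"
  assumes "linear G" "p \<in> range G" "\<And>w. (b - p) \<bullet> G w = 0"
  shows "closest_point (range G) b = p"
proof -
  obtain w0 where w0: "p = G w0" using assms(2) by blast
  obtain w1 where w1: "closest_point (range G) b = G w1"
    using closest_point_range_linear(1)[OF assms(1)] by blast
  have "(p - closest_point (range G) b) \<bullet> G (w0 - w1) = 0"
    using assms(3)[of "w0 - w1"] closest_point_range_linear(2)[OF assms(1), of b "w0 - w1"]
    by (simp add: inner_diff_left)
  then show ?thesis by (simp add: w0 w1 linear_diff[OF assms(1)])
qed

lemma linear_closest_point_range:
  fixes G :: "'a::euclidean_space \<Rightarrow> 'b::euclidean_space"
  assumes "linear G"
  shows "linear (closest_point (range G))"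
proof -
  note P = closest_point_range_linear[OF assms]
  have S: "subspace (range G)" using linear_subspace_image[OF assms subspace_UNIV] by simp
  show ?thesis
  proof (rule linearI)
    fix a b :: 'b and r :: real
    show "closest_point (range G) (a + b) = closest_point (range G) a + closest_point (range G) b"
      using P(2)[of a] P(2)[of b] subspace_add[OF S P(1) P(1)]
      by (intro closest_point_range_linear_unique[OF assms])
        (simp_all add: algebra_simps inner_diff_left inner_add_left)
    show "closest_point (range G) (r *\<^sub>R a) = r *\<^sub>R closest_point (range G) a"
      using P(2)[of a] subspace_scale[OF S P(1)]
      by (intro closest_point_range_linear_unique[OF assms])
        (simp_all add: algebra_simps inner_diff_left)
  qed
qed

definition least_squares :: "('a::euclidean_space \<Rightarrow> 'b::euclidean_space) \<Rightarrow> 'b \<Rightarrow> 'a" where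
  "least_squares G b = inv_into UNIV G (closest_point (range G) b)"

lemma least_squares_apply:
  fixes G :: "'a::euclidean_space \<Rightarrow> 'b::euclidean_space"
  shows "linear G \<Longrightarrow> G (least_squares G b) = closest_point (range G) b"
  unfolding least_squares_def using f_inv_into_f closest_point_range_linear(1) by metis

lemma least_squares_normal_equation:
  fixes G :: "'a::euclidean_space \<Rightarrow> 'b::euclidean_space"
  shows "linear G \<Longrightarrow> G (least_squares G b) \<bullet> G w = b \<bullet> G w"
  using closest_point_range_linear(2) least_squares_apply
  by (metis eq_iff_diff_eq_0 inner_diff_left)

lemma least_squares_of_image:
  fixes G :: "'a::euclidean_space \<Rightarrow> 'b::euclidean_space"
  shows "inj G \<Longrightarrow> least_squares G (G w) = w"
  unfolding least_squares_def by (simp add: closest_point_self inv_into_f_f)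

lemma linear_least_squares:
  fixes G :: "'a::euclidean_space \<Rightarrow> 'b::euclidean_space"
  assumes "linear G" "inj G"
  shows "linear (least_squares G)"
proof (rule linearI)
  fix a b :: 'b and r :: real
  note P = linear_closest_point_range[OF assms(1)] and A = least_squares_apply[OF assms(1)]
  have "G (least_squares G (a + b)) = G (least_squares G a + least_squares G b)"
    unfolding A linear_add[OF assms(1)] linear_add[OF P] ..
  then show "least_squares G (a + b) = least_squares G a + least_squares G b"
    using injD[OF assms(2)] by blast
  have "G (least_squares G (r *\<^sub>R a)) = G (r *\<^sub>R least_squares G a)"
    unfolding A linear_cmul[OF assms(1)] linear_cmul[OF P] ..
  then show "least_squares G (r *\<^sub>R a) = r *\<^sub>R least_squares G a"
    using injD[OF assms(2)] by blast
qed

lemma norm_linear_diff_le: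
  fixes G H :: "'a::euclidean_space \<Rightarrow> 'b::real_normed_vector"
  assumes "linear G" "linear H"
  shows "norm (G w - H w) \<le> norm w * (\<Sum>j\<in>Basis. norm (G j - H j))"
proof -
  have "G w - H w = (\<Sum>j\<in>Basis. (w \<bullet> j) *\<^sub>R (G j - H j))"
    using linear_eq_sum_Basis[OF assms(1), of w] linear_eq_sum_Basis[OF assms(2), of w]
    by (simp add: sum_subtractf[symmetric] scaleR_diff_right)
  also have "norm \<dots> \<le> (\<Sum>j\<in>Basis. norm w * norm (G j - H j))"
    by (intro sum_norm_le) (simp add: Basis_le_norm mult_right_mono)
  finally show ?thesis by (simp add: sum_distrib_left)
qed

lemma linear_equation_perturbation:
  fixes G H :: "'a::real_normed_vector \<Rightarrow> 'b::real_normed_vector"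
  assumes G: "linear G"
    and c: "c > 0" "\<And>w. c * norm w \<le> norm (G w)" "\<And>w. c * norm w \<le> norm (H w)"
    and e: "\<And>w. norm (G w - H w) \<le> e * norm w" "0 \<le> e"
    and sol: "H d = q" "G l = q"
  shows "c * c * norm (d - l) \<le> e * norm q"
proof -
  have "c * norm (d - l) \<le> norm (G d - H d)"
    using c(2)[of "d - l"] sol by (simp add: linear_diff[OF G])
  also have "\<dots> \<le> e * norm d" by (rule e(1))
  finally have "c * (c * norm (d - l)) \<le> e * (c * norm d)"
    using c(1) e(2) by (simp add: mult_left_mono algebra_simps)
  also have "\<dots> \<le> e * norm q"
    using c(3)[of d] sol(1) e(2) by (simp add: mult_left_mono)
  finally show ?thesis by (simp add: mult.assoc)
qed

lemma differentiable_imp_eventually_norm_diff_le: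
  assumes "q differentiable (at x)"
  shows "\<exists>K. \<forall>\<^sub>F y in at x. norm (q y - q x) \<le> K * norm (y - x)"
proof -
  obtain Q where Q: "(q has_derivative Q) (at x)" using assms by (auto simp: differentiable_def)
  obtain K where K: "\<And>v. norm (Q v) \<le> norm v * K"
    using bounded_linear.bounded[OF has_derivative_bounded_linear[OF Q]] by blast
  obtain \<delta> where "\<delta> > 0" and \<delta>: "\<And>w. norm w < \<delta> \<Longrightarrow> norm (q (x + w) - q x - Q w) \<le> 1 * norm w"
    using has_derivative_at_increment[OF Q zero_less_one] by blast
  have "norm (q y - q x) \<le> (K + 1) * norm (y - x)" if "y \<in> ball x \<delta>" for y
    using \<delta>[of "y - x"] K[of "y - x"] that
      norm_triangle_ineq[of "q y - q x - Q (y - x)" "Q (y - x)"]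
    by (simp add: dist_norm norm_minus_commute algebra_simps)
  then show ?thesis
    using eventually_at_ball[OF \<open>\<delta> > 0\<close>, of x UNIV] by (blast intro: eventually_mono)
qed

lemma has_derivative_zero_at:
  fixes r :: "'a::real_normed_vector \<Rightarrow> 'b::real_normed_vector"
  assumes "r x = 0" "(\<epsilon> \<longlongrightarrow> 0) (at x)" "\<forall>\<^sub>F y in at x. norm (r y) \<le> \<epsilon> y * norm (y - x)"
  shows "(r has_derivative (\<lambda>_. 0)) (at x)"
proof -
  have ev: "\<forall>\<^sub>F y in at x. norm (r y) / norm (y - x) \<le> \<epsilon> y"
    using assms(3) eventually_at_ball'[OF zero_less_one, of x UNIV]
    by eventually_elim (simp add: pos_divide_le_eq)
  have "((\<lambda>y. norm (r y) / norm (y - x)) \<longlongrightarrow> 0) (at x)"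
    by (rule tendsto_sandwich[OF always_eventually ev tendsto_const assms(2)]) simp
  then show ?thesis using assms(1) by (simp add: has_derivative_iff_norm)
qed

lemma eventually_linear_bounded_below:
  fixes A :: "'a::t2_space \<Rightarrow> 'c::euclidean_space \<Rightarrow> 'd::euclidean_space"
  assumes lin: "\<forall>\<^sub>F y in nhds x. linear (A y)" and inj: "inj (A x)"
    and cont: "\<And>j. j \<in> Basis \<Longrightarrow> continuous (at x) (\<lambda>y. A y j)"
  shows "\<exists>c>0. \<forall>\<^sub>F y in nhds x. \<forall>w. c * norm w \<le> norm (A y w)"
proof -
  have linx: "linear (A x)" using lin eventually_nhds_x_imp_x by blast
  obtain B where B: "B > 0" "\<And>w. B * norm w \<le> norm (A x w)"
    using linear_inj_bounded_below_pos[OF linx inj] by blast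
  have "((\<lambda>y. A y j) \<longlongrightarrow> A x j) (nhds x)" if "j \<in> Basis" for j
    using cont[OF that] tendsto_at_iff_tendsto_nhds[of "\<lambda>y. A y j" x] by (simp add: continuous_at)
  then have "((\<lambda>y. \<Sum>j\<in>Basis. norm (A y j - A x j))
      \<longlongrightarrow> (\<Sum>j\<in>(Basis::'c set). norm (A x j - A x j))) (nhds x)"
    by (intro tendsto_sum tendsto_norm tendsto_diff tendsto_const) auto
  then have "\<forall>\<^sub>F y in nhds x. (\<Sum>j\<in>Basis. norm (A y j - A x j)) < B / 2"
    using B(1) by (intro order_tendstoD(2)) auto
  with lin have "\<forall>\<^sub>F y in nhds x. \<forall>w. B / 2 * norm w \<le> norm (A y w)"
  proof (rule eventually_elim2, intro allI)
    fix y w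
    assume y: "linear (A y)" "(\<Sum>j\<in>Basis. norm (A y j - A x j)) < B / 2"
    have "norm (A x w - A y w) \<le> norm w * (\<Sum>j\<in>Basis. norm (A y j - A x j))"
      using norm_linear_diff_le[OF linx y(1), of w] by (simp add: norm_minus_commute)
    also have "\<dots> \<le> norm w * (B / 2)"
      using y(2) by (intro mult_left_mono) auto
    also have "\<dots> = B / 2 * norm w" by simp
    finally have "norm (A x w - A y w) \<le> B / 2 * norm w" .
    moreover have "B * norm w = B / 2 * norm w + B / 2 * norm w" by simp
    ultimately show "B / 2 * norm w \<le> norm (A y w)"
      using B(2)[of w] norm_triangle_sub[of "A x w" "A y w"] by linarith
  qed
  then show ?thesis using B(1) by (intro exI[of _ "B / 2"]) auto
qed

text \<open>Writing d = Ainv \<circ> q + r with Ainv the inverse of A x, the perturbation bound makes r of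
  order e times the distance to x, so r has derivative zero.\<close>
lemma differentiable_linear_equation:
  fixes A :: "'a::euclidean_space \<Rightarrow> 'c::euclidean_space \<Rightarrow> 'c"
  assumes q: "q differentiable (at x)" "q x = 0" and d: "d x = 0"
    and A: "linear (A x)" "c > 0" "\<And>w. c * norm w \<le> norm (A x w)" and e: "(e \<longlongrightarrow> 0) (at x)"
    and ev: "\<forall>\<^sub>F y in at x. (\<forall>w. c * norm w \<le> norm (A y w)) \<and>
      (\<forall>w. norm (A x w - A y w) \<le> e y * norm w) \<and> 0 \<le> e y \<and> A y (d y) = q y"
  shows "d differentiable (at x)"
proof -
  have "w = 0" if "A x w = 0" for w
  proof -
    have "c * norm w \<le> 0" using A(3)[of w] that by simp
    then show "w = 0" using A(2) by (simp add: mult_le_0_iff)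
  qed
  then have "inj (A x)" using linear_injective_0[OF A(1)] by blast
  then obtain Ainv where Ainv: "linear Ainv" "\<And>w. A x (Ainv w) = w"
    using linear_injective_isomorphism[OF A(1)] by blast
  obtain K where K: "\<forall>\<^sub>F y in at x. norm (q y) \<le> K * norm (y - x)"
    using differentiable_imp_eventually_norm_diff_le[OF q(1)] q(2) by auto
  define r where "r y = d y - Ainv (q y)" for y
  have small: "\<forall>\<^sub>F y in at x. norm (r y) \<le> (e y * K / (c * c)) * norm (y - x)"
    using ev K
  proof eventually_elim
    case (elim y)
    have "c * c * norm (r y) \<le> e y * norm (q y)"
      unfolding r_def
      by (rule linear_equation_perturbation[OF A(1,2,3), where H="A y"]) (use elim Ainv(2) in auto)
    also have "\<dots> \<le> e y * (K * norm (y - x))" using elim by (simp add: mult_left_mono)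
    finally show ?case using A(2) by (simp add: field_simps)
  qed
  have lim: "((\<lambda>y. e y * K / (c * c)) \<longlongrightarrow> 0) (at x)"
    using tendsto_mult_right[OF e, of K] by (intro tendsto_divide_zero) simp
  have "r x = 0" using d q(2) linear_0[OF Ainv(1)] by (simp add: r_def)
  then have "(r has_derivative (\<lambda>_. 0)) (at x)"
    by (rule has_derivative_zero_at[OF _ lim small])
  moreover have "((\<lambda>y. Ainv (q y)) has_derivative (\<lambda>v. Ainv (fd q x v))) (at x)"
    using linear_conv_bounded_linear[THEN iffD1, OF Ainv(1)] fd_has_derivative[OF q(1)]
    by (rule bounded_linear.has_derivative)
  ultimately have "(d has_derivative (\<lambda>v. Ainv (fd q x v) + 0)) (at x)"
    using has_derivative_add by (fastforce simp: r_def)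
  then show ?thesis by (auto simp: differentiable_def)
qed

lemma differentiable_linear_family:
  fixes A :: "'a::euclidean_space \<Rightarrow> 'c::euclidean_space \<Rightarrow> 'b::real_normed_vector"
  assumes U: "open U" "x \<in> U" and lin: "\<And>y. y \<in> U \<Longrightarrow> linear (A y)"
    and dA: "\<And>j. j \<in> Basis \<Longrightarrow> (\<lambda>y. A y j) differentiable (at x)"
  shows "(\<lambda>y. A y w) differentiable (at x)"
proof -
  have "(\<lambda>y. (w \<bullet> j) *\<^sub>R A y j) differentiable (at x)" if "j \<in> Basis" for j
    using dA[OF that] by (rule differentiable_scaleR[OF differentiable_const])
  then have "(\<lambda>y. \<Sum>j\<in>Basis. (w \<bullet> j) *\<^sub>R A y j) differentiable (at x)"
    by (intro differentiable_sum[OF finite_Basis] ballI)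
  moreover have "A y w = (\<Sum>j\<in>Basis. (w \<bullet> j) *\<^sub>R A y j)" if "y \<in> U" for y
    by (rule linear_eq_sum_Basis[OF lin[OF that]])
  ultimately show ?thesis
    by (rule differentiable_cong_open[OF U, THEN iffD2, rotated])
qed

lemma differentiable_linear_solve:
  fixes A :: "'a::euclidean_space \<Rightarrow> 'c::euclidean_space \<Rightarrow> 'c"
  assumes U: "open U" "x \<in> U" and lin: "\<And>y. y \<in> U \<Longrightarrow> linear (A y)" and inj: "inj (A x)"
    and dA: "\<And>j. j \<in> Basis \<Longrightarrow> (\<lambda>y. A y j) differentiable (at x)"
    and sol: "\<And>y. y \<in> U \<Longrightarrow> A y (s y) = r y" and dr: "r differentiable (at x)"
  shows "s differentiable (at x)"
proof -
  have cont: "continuous (at x) (\<lambda>y. A y j)" if "j \<in> Basis" for j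
    using differentiable_imp_continuous_within[OF dA[OF that]] .
  have "\<forall>\<^sub>F y in nhds x. linear (A y)"
    using eventually_nhds_in_open[OF U] by (rule eventually_mono) (rule lin)
  then obtain c where c: "c > 0"
    and coerc: "\<forall>\<^sub>F y in nhds x. \<forall>w. c * norm w \<le> norm (A y w)"
    using eventually_linear_bounded_below[where A=A, OF _ inj cont] by blast
  define e where "e y = (\<Sum>j\<in>Basis. norm (A x j - A y j))" for y
  have "((\<lambda>y. norm (A x j - A y j)) \<longlongrightarrow> norm (A x j - A x j)) (at x)" if "j \<in> Basis" for j
    using cont[OF that] by (intro tendsto_norm tendsto_diff tendsto_const) (simp add: continuous_at)
  then have "(e \<longlongrightarrow> (\<Sum>j\<in>(Basis::'c set). norm (A x j - A x j))) (at x)"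
    unfolding e_def by (rule tendsto_sum)
  then have e: "(e \<longlongrightarrow> 0) (at x)" by simp
  define q where "q y = r y - A y (s x)" for y
  have dq: "q differentiable (at x)"
    unfolding q_def[abs_def]
    by (intro differentiable_diff dr differentiable_linear_family[OF U lin dA])
  have ev: "\<forall>\<^sub>F y in at x. (\<forall>w. c * norm w \<le> norm (A y w)) \<and>
      (\<forall>w. norm (A x w - A y w) \<le> e y * norm w) \<and> 0 \<le> e y \<and> A y (s y - s x) = q y"
    using eventually_at_in_open[OF U] coerc[unfolded eventually_nhds_conv_at, THEN conjunct1]
  proof eventually_elim
    case (elim y)
    then have y: "y \<in> U" by simp
    show ?case
      using elim norm_linear_diff_le[OF lin[OF U(2)] lin[OF y]] linear_diff[OF lin[OF y]] sol[OF y]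
      by (auto simp: e_def q_def mult.commute sum_nonneg)
  qed
  have qx: "q x = 0" by (simp add: q_def sol[OF U(2)])
  have cx: "c * norm w \<le> norm (A x w)" for w
    using eventually_nhds_x_imp_x[OF coerc] by blast
  have "(\<lambda>y. s y - s x) differentiable (at x)"
    by (rule differentiable_linear_equation[where A=A and d="\<lambda>y. s y - s x",
          OF dq qx _ lin[OF U(2)] c cx e ev])
      simp
  then show ?thesis
    using differentiable_add[OF _ differentiable_const[of "s x"]] by fastforce
qed

lemma adjoint_eq_sum_Basis:
  fixes G :: "'a::euclidean_space \<Rightarrow> 'b::euclidean_space"
  assumes "linear G"
  shows "adjoint G v = (\<Sum>i\<in>Basis. (v \<bullet> G i) *\<^sub>R i)"
proof -
  have "adjoint G v = (\<Sum>i\<in>Basis. (adjoint G v \<bullet> i) *\<^sub>R i)"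
    by (rule euclidean_representation[symmetric])
  then show ?thesis by (simp add: adjoint_clauses(2)[OF assms])
qed

lemma differentiable_adjoint:
  fixes G :: "'a::euclidean_space \<Rightarrow> 'c::euclidean_space \<Rightarrow> 'b::euclidean_space"
  assumes U: "open U" "x \<in> U" and lin: "\<And>y. y \<in> U \<Longrightarrow> linear (G y)"
    and dG: "\<And>i. i \<in> Basis \<Longrightarrow> (\<lambda>y. G y i) differentiable (at x)" and dW: "W differentiable (at x)"
  shows "(\<lambda>y. adjoint (G y) (W y)) differentiable (at x)"
proof -
  have "(\<lambda>y. (W y \<bullet> G y i) *\<^sub>R i) differentiable (at x)" if "i \<in> Basis" for i
    using differentiable_inner[OF dW dG[OF that]]
    by (rule differentiable_scaleR[OF _ differentiable_const])
  then have "(\<lambda>y. \<Sum>i\<in>Basis. (W y \<bullet> G y i) *\<^sub>R i) differentiable (at x)"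
    by (intro differentiable_sum[OF finite_Basis] ballI)
  moreover have "adjoint (G y) (W y) = (\<Sum>i\<in>Basis. (W y \<bullet> G y i) *\<^sub>R i)" if "y \<in> U" for y
    by (rule adjoint_eq_sum_Basis[OF lin[OF that]])
  ultimately show ?thesis
    by (rule differentiable_cong_open[OF U, THEN iffD2, rotated])
qed

text \<open>The least squares solution solves the normal equations, whose Gram operator is invertible at x.\<close>
lemma differentiable_least_squares:
  fixes G :: "'a::euclidean_space \<Rightarrow> 'c::euclidean_space \<Rightarrow> 'b::euclidean_space"
  assumes U: "open U" "x \<in> U" and lin: "\<And>y. y \<in> U \<Longrightarrow> linear (G y)" and inj: "inj (G x)"
    and dG: "\<And>i. i \<in> Basis \<Longrightarrow> (\<lambda>y. G y i) differentiable (at x)" and dV: "V differentiable (at x)"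
  shows "(\<lambda>y. least_squares (G y) (V y)) differentiable (at x)"
proof (rule differentiable_linear_solve[OF U, where A="\<lambda>y w. adjoint (G y) (G y w)"])
  show lin': "linear (\<lambda>w. adjoint (G y) (G y w))" if "y \<in> U" for y
    using linear_compose[OF lin[OF that] adjoint_linear[OF lin[OF that]]] by (simp add: o_def)
  have "w = 0" if "adjoint (G x) (G x w) = 0" for w
  proof -
    have "G x w \<bullet> G x w = 0"
      using adjoint_clauses(1)[OF lin[OF U(2)], of w "G x w"] that by simp
    then show ?thesis using inj linear_injective_0[OF lin[OF U(2)]] by simp
  qed
  then show "inj (\<lambda>w. adjoint (G x) (G x w))"
    using linear_injective_0[OF lin'[OF U(2)]] by blast
  show "(\<lambda>y. adjoint (G y) (G y j)) differentiable (at x)" if "j \<in> Basis" for j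
    by (rule differentiable_adjoint[OF U lin dG dG[OF that]])
  show "adjoint (G y) (G y (least_squares (G y) (V y))) = adjoint (G y) (V y)" if "y \<in> U" for y
    by (rule euclidean_eqI)
      (simp add: adjoint_clauses(2)[OF lin[OF that]] least_squares_normal_equation[OF lin[OF that]])
qed (rule differentiable_adjoint[OF U lin dG dV])

section \<open>The geometry of an immersion in a chart\<close>

lemma push_eq: "push f Z = (\<lambda>y. fd f y (Z y))"
  by (simp add: push_def[abs_def])

lemma Ycal_eq: "Ycal f \<tau> P Q x = least_squares (fd f x) (Btens f \<tau> P Q x)"
  by (simp add: Ycal_def tanp_def least_squares_def)

context
  fixes U :: "'a::euclidean_space set" and f :: "'a \<Rightarrow> 'b::euclidean_space"
  assumes imm: "immersion_on U f"
begin

lemma open_U: "open U" and smooth_f: "smooth_on U f"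
  using imm by (simp_all add: immersion_on_def)

lemma inj_fd_f: "x \<in> U \<Longrightarrow> inj (fd f x)"
  using imm by (simp add: immersion_on_def)

lemma linear_fd_f: "x \<in> U \<Longrightarrow> linear (fd f x)"
  by (rule linear_fd[OF smooth_on_imp_differentiable[OF smooth_f]])

lemma fd2_f_symmetric: "x \<in> U \<Longrightarrow> fd2 f x a b = fd2 f x b a"
  by (rule smooth_on_fd2_symmetric[OF open_U smooth_f])

lemma tanp_eq: "x \<in> U \<Longrightarrow> tanp f x v = fd f x (least_squares (fd f x) v)"
  unfolding tanp_def by (simp add: least_squares_apply[OF linear_fd_f])

lemma norp_eq: "x \<in> U \<Longrightarrow> norp f x v = v - fd f x (least_squares (fd f x) v)"
  unfolding norp_def by (simp add: tanp_eq)

lemma linear_norp: "x \<in> U \<Longrightarrow> linear (norp f x)"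
  unfolding norp_def tanp_def
  using linear_compose_sub[OF linear_ident linear_closest_point_range[OF linear_fd_f]]
  by (simp add: id_def)

lemma fd_push:
  "x \<in> U \<Longrightarrow> Z differentiable (at x) \<Longrightarrow> fd (push f Z) x v = fd2 f x (Z x) v + fd f x (fd Z x v)"
  unfolding push_eq by (rule fd_fd_field[OF open_U smooth_f])

lemma differentiable_push:
  "x \<in> U \<Longrightarrow> Z differentiable (at x) \<Longrightarrow> push f Z differentiable (at x)"
  unfolding push_eq by (rule differentiable_fd_field[OF open_U smooth_f])

lemma koszul_const_field:
  assumes x: "x \<in> U" and dA: "A differentiable (at x)" and dZ: "Z differentiable (at x)"
  shows "koszul f A Z (\<lambda>_. z) x = 2 * (fd (push f Z) x (A x) \<bullet> fd f x z)"
proof -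
  define F where "F = fd f x"
  define h where "h = fd2 f x"
  have linF: "linear F" unfolding F_def using linear_fd_f[OF x] .
  have hsym: "h p q = h q p" for p q unfolding h_def using fd2_f_symmetric[OF x] .
  have dC: "(\<lambda>_. z) differentiable (at x)" by simp
  have push_at: "push f P x = F (P x)" for P by (simp add: push_def F_def)
  have fd_gf: "fd (gf f P Q) x v = fd (push f P) x v \<bullet> F (Q x) + F (P x) \<bullet> fd (push f Q) x v"
    if "P differentiable (at x)" "Q differentiable (at x)" for P Q v
  proof -
    have "gf f P Q = (\<lambda>y. push f P y \<bullet> push f Q y)" by (simp add: gf_def[abs_def] push_def)
    then show ?thesis
      using fd_inner[OF differentiable_push[OF x that(1)] differentiable_push[OF x that(2)]]
      by (simp add: push_at add.commute)
  qed
  have pZ: "fd (push f Z) x v = h (Z x) v + F (fd Z x v)" for v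
    unfolding h_def F_def by (rule fd_push[OF x dZ])
  have pA: "fd (push f A) x v = h (A x) v + F (fd A x v)" for v
    unfolding h_def F_def by (rule fd_push[OF x dA])
  have pC: "fd (push f (\<lambda>_. z)) x v = h z v" for v
    using fd_push[OF x dC] linear_0[OF linF] unfolding h_def F_def by (simp add: fd_const)
  have bAZ: "gf f (bracket A Z) (\<lambda>_. z) x = (F (fd Z x (A x)) - F (fd A x (Z x))) \<bullet> F z"
    by (simp add: gf_def bracket_def dir_def F_def[symmetric] linear_diff[OF linF])
  have bAC: "gf f (bracket A (\<lambda>_. z)) Z x = - (F (fd A x z) \<bullet> F (Z x))"
    by (simp add: gf_def bracket_def dir_def fd_const F_def[symmetric] linear_diff[OF linF]
      linear_0[OF linF] linear_neg[OF linF])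
  have bZC: "gf f (bracket Z (\<lambda>_. z)) A x = - (F (fd Z x z) \<bullet> F (A x))"
    by (simp add: gf_def bracket_def dir_def fd_const F_def[symmetric] linear_diff[OF linF]
      linear_0[OF linF] linear_neg[OF linF])
  show ?thesis
    unfolding koszul_def dir_def fd_gf[OF dZ dC] fd_gf[OF dA dC] fd_gf[OF dA dZ] pZ pA pC
      bAZ bAC bZC F_def[symmetric]
    using hsym[of z "A x"] hsym[of z "Z x"] hsym[of "A x" "Z x"]
    by (simp add: inner_add_left inner_add_right inner_diff_left inner_commute algebra_simps)
qed

text \<open>The Gauss formula: the Levi-Civita connection is the tangential part of the ambient
  derivative of the pushed-forward field.\<close>
lemma LC_eq_least_squares:
  assumes x: "x \<in> U" and dA: "A differentiable (at x)" and dZ: "Z differentiable (at x)"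
  shows "LC f A Z x = least_squares (fd f x) (fd (push f Z) x (A x))"
  unfolding LC_def
proof (rule the_equality)
  define F where "F = fd f x"
  define T where "T = fd (push f Z) x (A x)"
  have linF: "linear F" and injF: "inj F" unfolding F_def using linear_fd_f[OF x] inj_fd_f[OF x]
    by auto
  have sat: "2 * (F (least_squares F T) \<bullet> F z) = koszul f A Z (\<lambda>_. z) x" for z
    using least_squares_normal_equation[OF linF, of T z]
    unfolding koszul_const_field[OF x dA dZ] T_def F_def by simp
  then show "\<forall>z. 2 * (fd f x (least_squares (fd f x) T) \<bullet> fd f x z) = koszul f A Z (\<lambda>_. z) x"
    unfolding F_def by blast
  fix w
  assume "\<forall>z. 2 * (fd f x w \<bullet> fd f x z) = koszul f A Z (\<lambda>_. z) x"
  then have "F w \<bullet> F z = F (least_squares F T) \<bullet> F z" for z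
    using sat[of z] unfolding F_def by (metis mult_cancel_left zero_neq_numeral)
  then have "(F w - F (least_squares F T)) \<bullet> F z = 0" for z
    by (simp add: inner_diff_left)
  from this[of "w - least_squares F T"] have "F (w - least_squares F T) = 0"
    by (simp add: linear_diff[OF linF])
  then show "w = least_squares (fd f x) T"
    using injF linear_injective_0[OF linF] unfolding F_def by (metis eq_iff_diff_eq_0)
qed

lemma LC_eq_fd2:
  assumes "x \<in> U" "P differentiable (at x)" "Q differentiable (at x)"
  shows "LC f P Q x = least_squares (fd f x) (fd2 f x (Q x) (P x)) + fd Q x (P x)"
  unfolding LC_eq_least_squares[OF assms] fd_push[OF assms(1,3)]
    linear_add[OF linear_least_squares[OF linear_fd_f inj_fd_f, OF assms(1) assms(1)]]
    least_squares_of_image[OF inj_fd_f[OF assms(1)]] ..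

lemma sff_eq_fd2:
  assumes "x \<in> U" "Q differentiable (at x)"
  shows "sff f P Q x = norp f x (fd2 f x (Q x) (P x))"
  unfolding sff_def dir_def fd_push[OF assms] norp_eq[OF assms(1)]
    linear_add[OF linear_least_squares[OF linear_fd_f inj_fd_f, OF assms(1) assms(1)]]
    least_squares_of_image[OF inj_fd_f[OF assms(1)]] linear_add[OF linear_fd_f[OF assms(1)]]
  by simp

lemma differentiable_LC:
  assumes "x \<in> U" "smooth_on U P" "smooth_on U Q"
  shows "LC f P Q differentiable (at x)"
proof -
  have "smooth_on U (push f Q)"
    unfolding push_eq by (rule smooth_on_fd_field[OF open_U smooth_f assms(3)])
  then have "smooth_on U (\<lambda>y. fd (push f Q) y (P y))"
    by (rule smooth_on_fd_field[OF open_U _ assms(2)])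
  then have "(\<lambda>y. least_squares (fd f y) (fd (push f Q) y (P y))) differentiable (at x)"
    by (intro differentiable_least_squares[where G="\<lambda>y. fd f y",
          OF open_U assms(1) linear_fd_f inj_fd_f[OF assms(1)]]
        smooth_on_imp_differentiable[OF smooth_on_fd[OF smooth_f] assms(1)]
        smooth_on_imp_differentiable[OF _ assms(1)])
  moreover have "LC f P Q y = least_squares (fd f y) (fd (push f Q) y (P y))" if "y \<in> U" for y
    using LC_eq_least_squares[OF that] smooth_on_imp_differentiable[OF assms(2) that]
      smooth_on_imp_differentiable[OF assms(3) that] by blast
  ultimately show ?thesis
    by (rule differentiable_cong_open[OF open_U assms(1), THEN iffD2, rotated])
qed

lemma inner_norp_right: "x \<in> U \<Longrightarrow> norp f x a \<bullet> norp f x b = a \<bullet> norp f x b"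
  using least_squares_normal_equation[OF linear_fd_f, of x b "least_squares (fd f x) a"]
  by (simp add: norp_eq inner_diff_left inner_diff_right inner_commute)

lemma LC_torsion_free:
  assumes "x \<in> U" "P differentiable (at x)" "Q differentiable (at x)"
  shows "LC f P Q x - LC f Q P x = bracket P Q x"
  unfolding LC_eq_fd2[OF assms] LC_eq_fd2[OF assms(1,3,2)] bracket_def dir_def
    fd2_f_symmetric[OF assms(1), of "Q x" "P x"]
  by simp

end

section \<open>Infinitesimal bendings\<close>

context
  fixes U :: "'a::euclidean_space set" and f \<tau> :: "'a \<Rightarrow> 'b::euclidean_space"
  assumes imm: "immersion_on U f" and bend: "inf_bending U f \<tau>"
begin

lemma smooth_tau: "smooth_on U \<tau>"
  using bend by (simp add: inf_bending_def)

lemma fd2_tau_symmetric: "x \<in> U \<Longrightarrow> fd2 \<tau> x a b = fd2 \<tau> x b a"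
  by (rule smooth_on_fd2_symmetric[OF open_U[OF imm] smooth_tau])

lemma bending_polarized:
  assumes y: "y \<in> U"
  shows "fd f y u \<bullet> fd \<tau> y v + fd f y v \<bullet> fd \<tau> y u = 0"
proof -
  have lf: "linear (fd f y)" and lt: "linear (fd \<tau> y)"
    using linear_fd_f[OF imm y] linear_fd[OF smooth_on_imp_differentiable[OF smooth_tau y]] .
  have b: "fd f y w \<bullet> fd \<tau> y w = 0" for w using bend y by (simp add: inf_bending_def)
  have "0 = fd f y (u + v) \<bullet> fd \<tau> y (u + v)" using b by simp
  also have "\<dots> = fd f y u \<bullet> fd \<tau> y u + (fd f y u \<bullet> fd \<tau> y v + fd f y v \<bullet> fd \<tau> y u)
      + fd f y v \<bullet> fd \<tau> y v"
    by (simp add: linear_add[OF lf] linear_add[OF lt] inner_add_left inner_add_right)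
  finally show ?thesis using b by simp
qed

lemma fd_bending_polarized:
  assumes y: "y \<in> U"
  shows "fd2 f y u w \<bullet> fd \<tau> y v + fd f y u \<bullet> fd2 \<tau> y v w
    + (fd2 f y v w \<bullet> fd \<tau> y u + fd f y v \<bullet> fd2 \<tau> y u w) = 0"
proof -
  have d: "(\<lambda>y. fd f y a) differentiable (at y)" "(\<lambda>y. fd \<tau> y a) differentiable (at y)" for a
    using smooth_on_imp_differentiable[OF smooth_on_fd[OF smooth_f[OF imm]] y]
      smooth_on_imp_differentiable[OF smooth_on_fd[OF smooth_tau] y] .
  have "fd (\<lambda>y. fd f y u \<bullet> fd \<tau> y v + fd f y v \<bullet> fd \<tau> y u) y w = 0"
    by (rule fd_eq_0_open[OF open_U[OF imm] y bending_polarized])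
  moreover have "fd (\<lambda>y. fd f y u \<bullet> fd \<tau> y v + fd f y v \<bullet> fd \<tau> y u) y w
      = fd f y u \<bullet> fd2 \<tau> y v w + fd2 f y u w \<bullet> fd \<tau> y v +
        (fd f y v \<bullet> fd2 \<tau> y u w + fd2 f y v w \<bullet> fd \<tau> y u)"
    unfolding fd_add[OF differentiable_inner[OF d(1) d(2)] differentiable_inner[OF d(1) d(2)]]
      fd_inner[OF d(1) d(2)] fd2_def ..
  ultimately show ?thesis by (simp add: algebra_simps)
qed

lemma fd2_bending_polarized:
  assumes x: "x \<in> U"
  shows "(fd f x u \<bullet> fd3 \<tau> x v w z + fd2 f x u z \<bullet> fd2 \<tau> x v w)
      + (fd2 f x u w \<bullet> fd2 \<tau> x v z + fd3 f x u w z \<bullet> fd \<tau> x v)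
      + ((fd f x v \<bullet> fd3 \<tau> x u w z + fd2 f x v z \<bullet> fd2 \<tau> x u w)
      + (fd2 f x v w \<bullet> fd2 \<tau> x u z + fd3 f x v w z \<bullet> fd \<tau> x u)) = 0"
proof -
  have d1: "(\<lambda>y. fd f y a) differentiable (at x)" "(\<lambda>y. fd \<tau> y a) differentiable (at x)" for a
    using smooth_on_imp_differentiable[OF smooth_on_fd[OF smooth_f[OF imm]] x]
      smooth_on_imp_differentiable[OF smooth_on_fd[OF smooth_tau] x] .
  have d2: "(\<lambda>y. fd2 f y a b) differentiable (at x)" "(\<lambda>y. fd2 \<tau> y a b) differentiable (at x)"
    for a b
    unfolding fd2_def
    using smooth_on_imp_differentiable[OF smooth_on_fd[OF smooth_on_fd[OF smooth_f[OF imm]]] x]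
      smooth_on_imp_differentiable[OF smooth_on_fd[OF smooth_on_fd[OF smooth_tau]] x] .
  note di = differentiable_inner[OF d2(1) d1(2)] differentiable_inner[OF d1(1) d2(2)]
  have "fd (\<lambda>y. fd2 f y u w \<bullet> fd \<tau> y v + fd f y u \<bullet> fd2 \<tau> y v w
      + (fd2 f y v w \<bullet> fd \<tau> y u + fd f y v \<bullet> fd2 \<tau> y u w)) x z = 0"
    by (rule fd_eq_0_open[OF open_U[OF imm] x fd_bending_polarized])
  moreover have "fd (\<lambda>y. fd2 f y u w \<bullet> fd \<tau> y v + fd f y u \<bullet> fd2 \<tau> y v w
      + (fd2 f y v w \<bullet> fd \<tau> y u + fd f y v \<bullet> fd2 \<tau> y u w)) x z
    = (fd2 f x u w \<bullet> fd2 \<tau> x v z + fd3 f x u w z \<bullet> fd \<tau> x v)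
      + (fd f x u \<bullet> fd3 \<tau> x v w z + fd2 f x u z \<bullet> fd2 \<tau> x v w)
      + ((fd2 f x v w \<bullet> fd2 \<tau> x u z + fd3 f x v w z \<bullet> fd \<tau> x u)
      + (fd f x v \<bullet> fd3 \<tau> x u w z + fd2 f x v z \<bullet> fd2 \<tau> x u w))"
    unfolding fd_add[OF differentiable_add[OF di] differentiable_add[OF di]]
      fd_add[OF di] fd_inner[OF d2(1) d1(2)] fd_inner[OF d1(1) d2(2)]
    by (simp only: fd2_def[symmetric] fd3_def[symmetric])
  ultimately show ?thesis by (simp add: algebra_simps)
qed

text \<open>Solving the three cyclic permutations of the differentiated bending condition, as for the
  Christoffel symbols.\<close>
lemma inner_fd_fd2_tau:
  assumes x: "x \<in> U"
  shows "fd f x u \<bullet> fd2 \<tau> x v w = - (fd2 f x v w \<bullet> fd \<tau> x u)"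
proof -
  note hs = fd2_f_symmetric[OF imm x] and ks = fd2_tau_symmetric[OF x]
  note e1 = fd_bending_polarized[OF x, where u=u and v=v and w=w]
  note e2 = fd_bending_polarized[OF x, where u=v and v=w and w=u,
      unfolded hs[of w u] ks[of w u] hs[of v u] ks[of v u]]
  note e3 = fd_bending_polarized[OF x, where u=w and v=u and w=v, unfolded hs[of w v] ks[of w v]]
  show ?thesis using e1 e2 e3 by linarith
qed

lemma inner_fd2_fd2_exchange:
  assumes x: "x \<in> U"
  shows "fd2 f x u z \<bullet> fd2 \<tau> x v w + fd2 f x v w \<bullet> fd2 \<tau> x u z
    = fd2 f x v z \<bullet> fd2 \<tau> x u w + fd2 f x u w \<bullet> fd2 \<tau> x v z"
proof -
  note hs = fd2_f_symmetric[OF imm x] and ks = fd2_tau_symmetric[OF x]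
  note f3 = smooth_on_fd3_symmetric[OF open_U[OF imm] smooth_f[OF imm] x]
  note t3 = smooth_on_fd3_symmetric[OF open_U[OF imm] smooth_tau x]
  note e1 = fd2_bending_polarized[OF x, of u w v z, simplified hs ks f3 t3]
  note e2 = fd2_bending_polarized[OF x, of v w u z, simplified hs ks f3 t3]
  note e3 = fd2_bending_polarized[OF x, of u z v w, simplified hs ks f3 t3]
  note e4 = fd2_bending_polarized[OF x, of v z u w, simplified hs ks f3 t3]
  show ?thesis using e1 e2 e3 e4 by linarith
qed

lemma Lmap_eq: "Lmap \<tau> Q = (\<lambda>y. fd \<tau> y (Q y))"
  by (simp add: Lmap_def[abs_def] dir_def)

lemma smooth_Lmap: "smooth_on U Q \<Longrightarrow> smooth_on U (Lmap \<tau> Q)"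
  unfolding Lmap_eq by (rule smooth_on_fd_field[OF open_U[OF imm] smooth_tau])

lemma Btens_eq_fd2:
  assumes x: "x \<in> U" and "P differentiable (at x)" "Q differentiable (at x)"
  shows "Btens f \<tau> P Q x
    = fd2 \<tau> x (Q x) (P x) - fd \<tau> x (least_squares (fd f x) (fd2 f x (Q x) (P x)))"
  using linear_add[OF linear_fd[OF smooth_on_imp_differentiable[OF smooth_tau x]]]
  unfolding Btens_def dir_def Lmap_eq fd_fd_field[OF open_U[OF imm] smooth_tau assms(1,3)]
    LC_eq_fd2[OF imm assms]
  by simp

lemma betaT_eq_least_squares:
  assumes x: "x \<in> U" and "P differentiable (at x)" "Z differentiable (at x)"
  shows "betaT f \<tau> P Z x
    = norp f x (fd (Lmap \<tau> Z) x (P x) - fd \<tau> x (least_squares (fd f x) (fd (push f Z) x (P x))))"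
  unfolding betaT_def Btens_def dir_def LC_eq_least_squares[OF imm assms] Lmap_def ..

text \<open>The tangential terms cancel by the polarized bending condition.\<close>
lemma inner_betaT_sff_add:
  assumes x: "x \<in> U" and d: "P differentiable (at x)" "Q differentiable (at x)"
    "R differentiable (at x)" "T differentiable (at x)"
  shows "betaT f \<tau> P Q x \<bullet> sff f R T x + sff f P Q x \<bullet> betaT f \<tau> R T x
    = fd2 \<tau> x (Q x) (P x) \<bullet> fd2 f x (T x) (R x) + fd2 \<tau> x (T x) (R x) \<bullet> fd2 f x (Q x) (P x)"
proof -
  define F where "F = fd f x"
  define S where "S = least_squares F"
  define Dt where "Dt = fd \<tau> x"
  define N where "N = norp f x"
  have N: "N a = a - F (S a)" for a unfolding N_def F_def S_def by (rule norp_eq[OF imm x])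
  have NN: "N a \<bullet> N b = a \<bullet> N b" for a b unfolding N_def by (rule inner_norp_right[OF imm x])
  have k: "F (S a) \<bullet> fd2 \<tau> x p q = - (fd2 f x p q \<bullet> Dt (S a))" for a p q
    unfolding F_def Dt_def by (rule inner_fd_fd2_tau[OF x])
  have pol: "F (S a) \<bullet> Dt (S b) + F (S b) \<bullet> Dt (S a) = 0" for a b
    unfolding F_def Dt_def by (rule bending_polarized[OF x])
  have pair: "(fd2 \<tau> x p q - Dt (S (fd2 f x p q))) \<bullet> N h
      = fd2 \<tau> x p q \<bullet> h + fd2 f x p q \<bullet> Dt (S h) - Dt (S (fd2 f x p q)) \<bullet> h
        + Dt (S (fd2 f x p q)) \<bullet> F (S h)" for p q h
    using k[of h p q] unfolding N by (simp add: inner_diff_left inner_diff_right inner_commute)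
  have split: "betaT f \<tau> P' Q' x \<bullet> sff f R' T' x
      = (fd2 \<tau> x (Q' x) (P' x) - Dt (S (fd2 f x (Q' x) (P' x)))) \<bullet> N (fd2 f x (T' x) (R' x))"
    if "P' differentiable (at x)" "Q' differentiable (at x)" "T' differentiable (at x)"
    for P' Q' R' T'
    unfolding betaT_def Btens_eq_fd2[OF x that(1,2)] sff_eq_fd2[OF imm x that(3)] N_def[symmetric] NN
      F_def[symmetric] S_def[symmetric] Dt_def[symmetric] ..
  show ?thesis
    unfolding split[OF d(1,2,4)] inner_commute[of "sff f P Q x"] split[OF d(3,4,2)]
    using pair[of "Q x" "P x" "fd2 f x (T x) (R x)"] pair[of "T x" "R x" "fd2 f x (Q x) (P x)"]
      pol[of "fd2 f x (Q x) (P x)" "fd2 f x (T x) (R x)"]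
    by (simp add: inner_commute algebra_simps)
qed

lemma betaT_sff_exchange:
  assumes x: "x \<in> U" and d: "X differentiable (at x)" "Y differentiable (at x)"
    "Z differentiable (at x)" "W differentiable (at x)"
  shows "betaT f \<tau> X W x \<bullet> sff f Y Z x + sff f X W x \<bullet> betaT f \<tau> Y Z x
    = betaT f \<tau> X Z x \<bullet> sff f Y W x + sff f X Z x \<bullet> betaT f \<tau> Y W x"
  unfolding inner_betaT_sff_add[OF x d(1,4,2,3)] inner_betaT_sff_add[OF x d(1,3,2,4)]
  using inner_fd2_fd2_exchange[OF x, of "X x" "W x" "Y x" "Z x"]
    fd2_f_symmetric[OF imm x] fd2_tau_symmetric[OF x]
  by (simp add: inner_commute algebra_simps)

lemma Btens_eq_fd_field: "Btens f \<tau> P Q = (\<lambda>y. fd (Lmap \<tau> Q) y (P y) - fd \<tau> y (LC f P Q y))"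
  by (simp add: Btens_def[abs_def] dir_def Lmap_def)

lemma differentiable_Btens:
  assumes x: "x \<in> U" and "smooth_on U P" "smooth_on U Q"
  shows "Btens f \<tau> P Q differentiable (at x)"
  unfolding Btens_eq_fd_field
  by (intro differentiable_diff assms(2,3)
      smooth_on_imp_differentiable[OF smooth_on_fd_field[OF open_U[OF imm] smooth_Lmap] x]
      differentiable_fd_field[OF open_U[OF imm] smooth_tau x] differentiable_LC[OF imm x])

lemma differentiable_Ycal:
  assumes x: "x \<in> U" and "smooth_on U P" "smooth_on U Q"
  shows "Ycal f \<tau> P Q differentiable (at x)"
  unfolding Ycal_eq[abs_def]
  by (rule differentiable_least_squares[where G="\<lambda>y. fd f y",
        OF open_U[OF imm] x linear_fd_f[OF imm] inj_fd_f[OF imm x]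
        smooth_on_imp_differentiable[OF smooth_on_fd[OF smooth_f[OF imm]] x]
        differentiable_Btens[OF assms]])

lemma norp_fd_betaT:
  assumes x: "x \<in> U" and sP: "smooth_on U P" and dQ: "Q differentiable (at x)"
    and sZ: "smooth_on U Z"
  shows "norp f x (fd (betaT f \<tau> P Z) x (Q x))
    = norp f x (fd (\<lambda>y. fd (Lmap \<tau> Z) y (P y)) x (Q x)) - betaT f \<tau> Q (LC f P Z) x
      - norp f x (fd \<tau> x (LC f Q (LC f P Z) x)) - sff f Q (Ycal f \<tau> P Z) x"
proof -
  have "betaT f \<tau> P Z y = Btens f \<tau> P Z y - push f (Ycal f \<tau> P Z) y" if "y \<in> U" for y
    unfolding betaT_def norp_eq[OF imm that] push_def Ycal_eq ..
  then have "fd (betaT f \<tau> P Z) x = fd (\<lambda>y. Btens f \<tau> P Z y - push f (Ycal f \<tau> P Z) y) x"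
    by (rule fd_cong_open[OF open_U[OF imm] x])
  also have "\<dots> = (\<lambda>v. fd (Btens f \<tau> P Z) x v - fd (push f (Ycal f \<tau> P Z)) x v)"
    using fd_diff[OF differentiable_Btens[OF x sP sZ]
        differentiable_push[OF imm x differentiable_Ycal[OF x sP sZ]]]
    by (rule ext)
  finally have bt: "fd (betaT f \<tau> P Z) x (Q x)
      = fd (\<lambda>y. fd (Lmap \<tau> Z) y (P y)) x (Q x) - fd (\<lambda>y. fd \<tau> y (LC f P Z y)) x (Q x)
        - fd (push f (Ycal f \<tau> P Z)) x (Q x)"
    unfolding Btens_eq_fd_field
    using fd_diff[OF
        smooth_on_imp_differentiable[OF smooth_on_fd_field[OF open_U[OF imm] smooth_Lmap[OF sZ] sP] x]
        differentiable_fd_field[OF open_U[OF imm] smooth_tau x differentiable_LC[OF imm x sP sZ]]]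
    by simp
  have "fd (\<lambda>y. fd \<tau> y (LC f P Z y)) x (Q x)
      = Btens f \<tau> Q (LC f P Z) x + fd \<tau> x (LC f Q (LC f P Z) x)"
    by (simp add: Btens_def dir_def Lmap_eq)
  with bt show ?thesis
    unfolding betaT_def sff_def dir_def
    by (simp add: linear_diff[OF linear_norp[OF imm x]] linear_add[OF linear_norp[OF imm x]])
qed

lemma betaT_LC_torsion:
  assumes x: "x \<in> U" and sX: "smooth_on U X" and sY: "smooth_on U Y" and sZ: "smooth_on U Z"
  shows "betaT f \<tau> (LC f X Y) Z x - betaT f \<tau> (LC f Y X) Z x
    = norp f x (fd (Lmap \<tau> Z) x (bracket X Y x)) - norp f x (fd \<tau> x (LC f (bracket X Y) Z x))"
proof -
  have dX: "X differentiable (at x)" and dY: "Y differentiable (at x)"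
    and dZ: "Z differentiable (at x)"
    using smooth_on_imp_differentiable[OF sX x] smooth_on_imp_differentiable[OF sY x]
      smooth_on_imp_differentiable[OF sZ x] .
  have dXY: "bracket X Y differentiable (at x)"
    unfolding bracket_def[abs_def] dir_def
    by (intro differentiable_diff differentiable_fd_field[OF open_U[OF imm] _ x] sX sY dX dY)
  define N where "N = norp f x"
  define \<Phi> where
    "\<Phi> v = fd (Lmap \<tau> Z) x v - fd \<tau> x (least_squares (fd f x) (fd (push f Z) x v))" for v
  note lin = linear_fd[OF smooth_on_imp_differentiable[OF smooth_Lmap[OF sZ] x]]
    linear_fd[OF smooth_on_imp_differentiable[OF smooth_tau x]]
    linear_least_squares[OF linear_fd_f[OF imm x] inj_fd_f[OF imm x]]
    linear_fd[OF differentiable_push[OF imm x dZ]]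
  have "N (\<Phi> (LC f X Y x)) - N (\<Phi> (LC f Y X x)) = N (\<Phi> (LC f X Y x - LC f Y X x))"
    by (simp add: \<Phi>_def N_def linear_diff[OF linear_norp[OF imm x]] linear_diff[OF lin(1)]
        linear_diff[OF lin(2)] linear_diff[OF lin(3)] linear_diff[OF lin(4)])
  then show ?thesis
    unfolding betaT_eq_least_squares[OF x differentiable_LC[OF imm x sX sY] dZ]
      betaT_eq_least_squares[OF x differentiable_LC[OF imm x sY sX] dZ]
      LC_eq_least_squares[OF imm x dXY dZ] LC_torsion_free[OF imm x dX dY]
    by (simp add: \<Phi>_def N_def linear_diff[OF linear_norp[OF imm x]])
qed

lemma nperp_beta_Codazzi:
  assumes x: "x \<in> U" and sX: "smooth_on U X" and sY: "smooth_on U Y" and sZ: "smooth_on U Z"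
  shows "nperp_beta f \<tau> X Y Z x - nperp_beta f \<tau> Y X Z x
    = sff f Y (Ycal f \<tau> X Z) x - sff f X (Ycal f \<tau> Y Z) x - norp f x (Lmap \<tau> (curv f X Y Z) x)"
proof -
  define N where "N = norp f x"
  define Dt where "Dt = fd \<tau> x"
  have dX: "X differentiable (at x)" and dY: "Y differentiable (at x)"
    using smooth_on_imp_differentiable[OF sX x] smooth_on_imp_differentiable[OF sY x] .
  note linN = linear_norp[OF imm x]
    and linD = linear_fd[OF smooth_on_imp_differentiable[OF smooth_tau x]]
  have "N (fd (\<lambda>y. fd (Lmap \<tau> Z) y (Y y)) x (X x)) - N (fd (\<lambda>y. fd (Lmap \<tau> Z) y (X y)) x (Y x))
      = N (fd (Lmap \<tau> Z) x (bracket X Y x))"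
    unfolding N_def linear_diff[OF linN, symmetric]
    by (rule arg_cong[OF fd_fd_field_commute[OF open_U[OF imm] smooth_Lmap[OF sZ] x dX dY]])
  then have comm: "N (fd (\<lambda>y. fd (Lmap \<tau> Z) y (Y y)) x (X x))
      = N (fd (Lmap \<tau> Z) x (bracket X Y x)) + N (fd (\<lambda>y. fd (Lmap \<tau> Z) y (X y)) x (Y x))"
    by (simp add: algebra_simps)
  have tor: "betaT f \<tau> (LC f X Y) Z x
      = betaT f \<tau> (LC f Y X) Z x + N (fd (Lmap \<tau> Z) x (bracket X Y x))
        - N (Dt (LC f (bracket X Y) Z x))"
    using betaT_LC_torsion[OF x sX sY sZ] unfolding N_def Dt_def by (simp add: algebra_simps)
  have curv: "N (Lmap \<tau> (curv f X Y Z) x)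
      = N (Dt (LC f X (LC f Y Z) x)) - N (Dt (LC f Y (LC f X Z) x))
        - N (Dt (LC f (bracket X Y) Z x))"
    unfolding Lmap_def dir_def curv_def Dt_def N_def
    by (simp add: linear_diff[OF linN] linear_diff[OF linD])
  show ?thesis
    unfolding nperp_beta_def dir_def norp_fd_betaT[OF x sY dX sZ] norp_fd_betaT[OF x sX dY sZ]
    unfolding N_def[symmetric] Dt_def[symmetric] comm curv tor
    by (simp add: algebra_simps)
qed

end

theorem proposition9:
  fixes U :: "'a::euclidean_space set"
    and f \<tau> :: "'a \<Rightarrow> 'b::euclidean_space"
    and X Y Z W :: "'a \<Rightarrow> 'a"
  assumes "immersion_on U f"
    and "inf_bending U f \<tau>"
    and "smooth_on U X" and "smooth_on U Y" and "smooth_on U Z" and "smooth_on U W"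
    and "x \<in> U"
  shows "(betaT f \<tau> X W x \<bullet> sff f Y Z x + sff f X W x \<bullet> betaT f \<tau> Y Z x
           = betaT f \<tau> X Z x \<bullet> sff f Y W x + sff f X Z x \<bullet> betaT f \<tau> Y W x)
         \<and> (nperp_beta f \<tau> X Y Z x - nperp_beta f \<tau> Y X Z x
           = sff f Y (Ycal f \<tau> X Z) x - sff f X (Ycal f \<tau> Y Z) x
             - norp f x (Lmap \<tau> (curv f X Y Z) x))"
proof
  show "betaT f \<tau> X W x \<bullet> sff f Y Z x + sff f X W x \<bullet> betaT f \<tau> Y Z x
      = betaT f \<tau> X Z x \<bullet> sff f Y W x + sff f X Z x \<bullet> betaT f \<tau> Y W x"
    using betaT_sff_exchange[OF assms(1,2,7)] smooth_on_imp_differentiable[OF _ assms(7)] assms(3-6)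
    by blast
  show "nperp_beta f \<tau> X Y Z x - nperp_beta f \<tau> Y X Z x
      = sff f Y (Ycal f \<tau> X Z) x - sff f X (Ycal f \<tau> Y Z) x - norp f x (Lmap \<tau> (curv f X Y Z) x)"
    by (rule nperp_beta_Codazzi[OF assms(1,2,7,3,4,5)])
qed

end
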